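(* Let $H$ be a finite group, $N \trianglelefteq H$, and $\pi : H \to H/N$ the projection. Let $M_1, \dots, M_k$ be maximal subgroups of $H$ in general position such that $\{M_1 \cap N, \dots, M_l \cap N\}$ is in general position and $M_j \supseteq \bigcap_{1 \leq i \leq l} (M_i \cap N)$ for every $j > l$. Let $R = \bigcap_{1 \leq i \leq l} M_i$. Then $l \leq \mathrm{MaxDim}(H) - \mathrm{MaxDim}(H/N, \pi(R))$. Moreover, if $N/\Phi(N)$ is abelian, then $l \leq \mathrm{MaxDim}(H) - \mathrm{MaxDim}(H/N)$ and $l \leq \mathrm{MaxDim}_H(N)$, where $H$ acts on $N$ by conjugation.
   Context: All groups are finite. A finite set $\{H_1,\dots,H_n\}$ of subgroups of a group $G$ is in general position if for every $1 \le j \le n$, $\bigcap_{i \neq j} H_i \supsetneq \bigcap_{i} H_i$. $\mathrm{MaxDim}(G)$ is the largest cardinality of a collection of maximal subgroups of $G$ in general position. For a subgroup $A \le G$, $\mathrm{MaxDim}(G, A)$ is the largest $k$ such that there exist maximal subgroups $M_1,\dots,M_k$ of $G$ with $\{M_1 \cap A, \dots, M_k \cap A\}$ in general position. If a group $B$ acts on $G$, $\mathrm{MaxDim}_B(G)$ is the largest cardinality of a collection of maximal $B$-invariant (proper) subgroups of $G$ that is in general position. $\Phi(N)$ is the Frattini subgroup of $N$, the intersection of all maximal subgroups of $N$. *)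

theory Defs
  imports "HOL-Algebra.Algebra"
begin

definition maximal_subgroup :: "('a, 'b) monoid_scheme \<Rightarrow> 'a set \<Rightarrow> bool" where
  "maximal_subgroup G M \<longleftrightarrow> subgroup M G \<and> M \<noteq> carrier G \<and>
     (\<forall>K. subgroup K G \<and> M \<subseteq> K \<longrightarrow> K = M \<or> K = carrier G)"

text \<open>General position of an indexed family of subgroups H i (i in I) of an ambient
  group with carrier A; an empty intersection is the ambient group A.\<close>
definition gen_pos :: "'a set \<Rightarrow> 'i set \<Rightarrow> ('i \<Rightarrow> 'a set) \<Rightarrow> bool" where
  "gen_pos A I H \<longleftrightarrow>
     (\<forall>j\<in>I. A \<inter> (\<Inter>i\<in>I - {j}. H i) \<supset> A \<inter> (\<Inter>i\<in>I. H i))"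

definition MaxDim :: "('a, 'b) monoid_scheme \<Rightarrow> nat" where
  "MaxDim G = Max {k. \<exists>M. (\<forall>i\<in>{1..k}. maximal_subgroup G (M i)) \<and>
                            gen_pos (carrier G) {1..k} M}"

definition MaxDim_rel :: "('a, 'b) monoid_scheme \<Rightarrow> 'a set \<Rightarrow> nat" where
  "MaxDim_rel G A = Max {k. \<exists>M. (\<forall>i\<in>{1..k}. maximal_subgroup G (M i)) \<and>
                            gen_pos A {1..k} (\<lambda>i. M i \<inter> A)}"

definition conj_invariant :: "('a, 'b) monoid_scheme \<Rightarrow> 'a set \<Rightarrow> 'a set \<Rightarrow> bool" where
  "conj_invariant H N K \<longleftrightarrow> subgroup K (H\<lparr>carrier := N\<rparr>) \<and>
     (\<forall>h\<in>carrier H. (\<lambda>x. h \<otimes>\<^bsub>H\<^esub> x \<otimes>\<^bsub>H\<^esub> inv\<^bsub>H\<^esub> h) ` K = K)"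

definition maximal_conj_invariant :: "('a, 'b) monoid_scheme \<Rightarrow> 'a set \<Rightarrow> 'a set \<Rightarrow> bool" where
  "maximal_conj_invariant H N K \<longleftrightarrow> conj_invariant H N K \<and> K \<noteq> N \<and>
     (\<forall>L. conj_invariant H N L \<and> L \<noteq> N \<and> K \<subseteq> L \<longrightarrow> L = K)"

definition MaxDim_conj :: "('a, 'b) monoid_scheme \<Rightarrow> 'a set \<Rightarrow> nat" where
  "MaxDim_conj H N = Max {k. \<exists>M. (\<forall>i\<in>{1..k}. maximal_conj_invariant H N (M i)) \<and>
                            gen_pos N {1..k} M}"

text \<open>Frattini subgroup: intersection of all maximal subgroups (the whole group if none).\<close>
definition frattini :: "('a, 'b) monoid_scheme \<Rightarrow> 'a set" where
  "frattini G = carrier G \<inter> \<Inter>{M. maximal_subgroup G M}"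

end

theory Submission
  imports Defs
begin

text \<open>Lift maximal subgroups of \<open>H/N\<close> witnessing \<open>MaxDim(H/N, \<pi>(R))\<close> to their preimages,
  which contain \<open>N\<close>, and append them to \<open>M\<^sub>1, \<dots>, M\<^sub>l\<close>: the general position witnesses for
  the \<open>M\<^sub>i\<close> can be taken in \<open>N\<close>, those for the lifted subgroups in \<open>R\<close>, so the combined
  family of maximal subgroups of \<open>H\<close> is in general position.

  If \<open>N/\<Phi>(N)\<close> is abelian, then \<open>\<Phi>(N)\<close> lies in every maximal subgroup of \<open>H\<close>, so every
  subgroup of \<open>N\<close> containing it is normalised by \<open>N\<close>. Hence each \<open>M\<^sub>i \<inter> N\<close> is normal in
  \<open>H = N M\<^sub>i\<close> and is a maximal \<open>H\<close>-invariant subgroup of \<open>N\<close>, which bounds \<open>l\<close> by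
  \<open>MaxDim\<^sub>H(N)\<close>. Moreover the normal subgroups \<open>N \<inter> \<Inter>\<^sub>i\<^sub>\<noteq>\<^sub>j M\<^sub>i\<close> supplement \<open>M\<^sub>j\<close>, so every
  element of \<open>H\<close> can be moved into \<open>R\<close> by an element of \<open>N\<close>; thus \<open>\<pi>(R) = H/N\<close>.\<close>

section \<open>General position\<close>

lemma gen_pos_iff:
  "gen_pos A I F \<longleftrightarrow> (\<forall>j\<in>I. \<exists>x\<in>A. (\<forall>i\<in>I - {j}. x \<in> F i) \<and> x \<notin> F j)"
proof -
  have "A \<inter> (\<Inter>i\<in>I - {j}. F i) \<supset> A \<inter> (\<Inter>i\<in>I. F i) \<longleftrightarrow>
      (\<exists>x\<in>A. (\<forall>i\<in>I - {j}. x \<in> F i) \<and> x \<notin> F j)" if "j \<in> I" for j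
  proof -
    have "(\<Inter>i\<in>I. F i) = F j \<inter> (\<Inter>i\<in>I - {j}. F i)"
      using that by blast
    then show ?thesis
      by (simp add: psubset_eq subset_iff) blast
  qed
  then show ?thesis
    unfolding gen_pos_def by (simp cong: ball_cong)
qed

lemma gen_pos_cong:
  assumes "\<And>i. i \<in> I \<Longrightarrow> F i \<inter> A = F' i \<inter> A"
  shows "gen_pos A I F \<longleftrightarrow> gen_pos A I F'"
proof -
  have "x \<in> F i \<longleftrightarrow> x \<in> F' i" if "x \<in> A" "i \<in> I" for x i
    using assms[OF that(2)] that(1) by blast
  then show ?thesis
    unfolding gen_pos_iff by (intro ball_cong bex_cong refl conj_cong) auto
qed

lemma gen_pos_vimage:
  assumes "gen_pos (f ` A) I F"
  shows "gen_pos A I (\<lambda>i. f -` F i)"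
  unfolding gen_pos_iff
proof
  fix j assume "j \<in> I"
  then obtain y where "y \<in> f ` A" "\<forall>i\<in>I - {j}. y \<in> F i" "y \<notin> F j"
    using assms unfolding gen_pos_iff by blast
  then show "\<exists>x\<in>A. (\<forall>i\<in>I - {j}. x \<in> f -` F i) \<and> x \<notin> f -` F j"
    by auto
qed

lemma gen_pos_not_subset:
  assumes "gen_pos A I F" and "j \<in> I"
  shows "\<not> A \<subseteq> F j"
  using assms unfolding gen_pos_iff by blast

lemma gen_pos_inj_on:
  assumes "gen_pos A I F"
  shows "inj_on (\<lambda>i. F i \<inter> A) I"
proof (rule inj_onI, rule ccontr)
  fix i j assume "i \<in> I" "j \<in> I" "F i \<inter> A = F j \<inter> A" "i \<noteq> j"
  moreover obtain x where "x \<in> A" "\<forall>i\<in>I - {j}. x \<in> F i" "x \<notin> F j"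
    using assms \<open>j \<in> I\<close> unfolding gen_pos_iff by blast
  ultimately show False
    by blast
qed

lemma gen_pos_card_le:
  fixes k :: nat
  assumes "finite A" and "gen_pos A {1..k} F"
  shows "k \<le> 2 ^ card A"
proof -
  have "k = card ((\<lambda>i. F i \<inter> A) ` {1..k})"
    using gen_pos_inj_on[OF assms(2)] by (simp add: card_image)
  also have "\<dots> \<le> card (Pow A)"
    using assms(1) by (intro card_mono) auto
  finally show ?thesis
    using assms(1) by (simp add: card_Pow)
qed

definition append_family :: "nat \<Rightarrow> (nat \<Rightarrow> 'a) \<Rightarrow> (nat \<Rightarrow> 'a) \<Rightarrow> nat \<Rightarrow> 'a" where
  "append_family l F K i = (if i \<le> l then F i else K (i - l))"

lemma append_family_ball:
  fixes l m :: nat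
  assumes "\<forall>i\<in>{1..l}. P (F i)" and "\<forall>i\<in>{1..m}. P (K i)"
  shows "\<forall>i\<in>{1..l+m}. P (append_family l F K i)"
proof
  fix i assume i: "i \<in> {1..l+m}"
  show "P (append_family l F K i)"
  proof (cases "i \<le> l")
    case True
    with i assms(1) show ?thesis
      by (simp add: append_family_def)
  next
    case False
    with i have "i - l \<in> {1..m}"
      by auto
    with False assms(2) show ?thesis
      by (simp add: append_family_def)
  qed
qed

lemma gen_pos_append_family:
  fixes l m :: nat
  assumes "gen_pos B {1..l} F" "B \<subseteq> A" "\<forall>i\<in>{1..m}. B \<subseteq> K i"
    and "gen_pos C {1..m} K" "C \<subseteq> A" "\<forall>i\<in>{1..l}. C \<subseteq> F i"
  shows "gen_pos A {1..l+m} (append_family l F K)"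
  unfolding gen_pos_iff append_family_def
proof
  fix j assume j: "j \<in> {1..l+m}"
  have shift: "i - l \<in> {1..m}" if "i \<in> {1..l+m}" "\<not> i \<le> l" for i
    using that by auto
  show "\<exists>x\<in>A. (\<forall>i\<in>{1..l+m} - {j}. x \<in> (if i \<le> l then F i else K (i - l))) \<and>
      x \<notin> (if j \<le> l then F j else K (j - l))"
  proof (cases "j \<le> l")
    case True
    then obtain x where "x \<in> B" "\<forall>i\<in>{1..l} - {j}. x \<in> F i" "x \<notin> F j"
      using assms(1) j unfolding gen_pos_iff by fastforce
    with True show ?thesis
      using assms(2,3) shift by (intro bexI[of _ x]) auto
  next
    case False
    then obtain x where "x \<in> C" "\<forall>i\<in>{1..m} - {j - l}. x \<in> K i" "x \<notin> K (j - l)"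
      using assms(4) shift j unfolding gen_pos_iff by blast
    moreover have "i - l \<noteq> j - l" if "i \<in> {1..l+m}" "\<not> i \<le> l" "i \<noteq> j" for i
      using that False by auto
    ultimately show ?thesis
      using False assms(5,6) shift by (intro bexI[of _ x]) auto
  qed
qed

lemma bounded_nat_set_Max:
  fixes S :: "nat set"
  assumes "\<forall>k\<in>S. k \<le> b" and "x \<in> S"
  shows "x \<le> Max S" and "Max S \<in> S"
proof -
  have "finite S"
    using assms(1) finite_nat_set_iff_bounded_le by blast
  then show "x \<le> Max S" "Max S \<in> S"
    using assms(2) by (auto intro: Max_in)
qed

lemma MaxDim_ge:
  assumes "finite (carrier G)"
    and "\<forall>i\<in>{1..k}. maximal_subgroup G (M i)" and "gen_pos (carrier G) {1..k} M"
  shows "k \<le> MaxDim G"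
  unfolding MaxDim_def
proof (rule bounded_nat_set_Max(1))
  show "\<forall>k'\<in>{k. \<exists>M. (\<forall>i\<in>{1..k}. maximal_subgroup G (M i)) \<and> gen_pos (carrier G) {1..k} M}.
      k' \<le> (2::nat) ^ card (carrier G)"
    using gen_pos_card_le[OF assms(1)] by blast
qed (use assms(2,3) in blast)

lemma MaxDim_conj_ge:
  assumes "finite N"
    and "\<forall>i\<in>{1..k}. maximal_conj_invariant H N (M i)" and "gen_pos N {1..k} M"
  shows "k \<le> MaxDim_conj H N"
  unfolding MaxDim_conj_def
proof (rule bounded_nat_set_Max(1))
  show "\<forall>k'\<in>{k. \<exists>M. (\<forall>i\<in>{1..k}. maximal_conj_invariant H N (M i)) \<and> gen_pos N {1..k} M}.
      k' \<le> (2::nat) ^ card N"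
    using gen_pos_card_le[OF assms(1)] by blast
qed (use assms(2,3) in blast)

lemma MaxDim_rel_attained:
  assumes "finite A"
  obtains M where "\<forall>i\<in>{1..MaxDim_rel G A}. maximal_subgroup G (M i)"
    and "gen_pos A {1..MaxDim_rel G A} (\<lambda>i. M i \<inter> A)"
proof -
  let ?S = "{k::nat. \<exists>M. (\<forall>i\<in>{1..k}. maximal_subgroup G (M i)) \<and> gen_pos A {1..k} (\<lambda>i. M i \<inter> A)}"
  have "\<forall>k\<in>?S. k \<le> (2::nat) ^ card A"
    using gen_pos_card_le[OF assms] by blast
  moreover have "0 \<in> ?S"
    by (auto simp: gen_pos_def)
  ultimately have "Max ?S \<in> ?S"
    by (rule bounded_nat_set_Max(2))
  then show ?thesis
    using that unfolding MaxDim_rel_def by blast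
qed

lemma MaxDim_rel_carrier: "MaxDim_rel G (carrier G) = MaxDim G"
proof -
  have "gen_pos (carrier G) I (\<lambda>i. M i \<inter> carrier G) \<longleftrightarrow> gen_pos (carrier G) I M"
    for I and M :: "nat \<Rightarrow> 'a set"
    by (rule gen_pos_cong) blast
  then show ?thesis
    unfolding MaxDim_rel_def MaxDim_def by simp
qed


section \<open>Maximal and normal subgroups\<close>

lemma exists_maximal_subgroup:
  assumes "finite (carrier G)" and "subgroup K G" and "K \<noteq> carrier G"
  obtains M where "maximal_subgroup G M" and "K \<subseteq> M"
proof -
  let ?S = "{L. subgroup L G \<and> L \<noteq> carrier G}"
  have "?S \<subseteq> Pow (carrier G)"
    by (auto dest: subgroup.subset)
  then have "finite ?S"
    by (rule finite_subset) (simp add: assms(1))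
  moreover have "K \<in> ?S"
    using assms(2,3) by blast
  ultimately obtain M where M: "M \<in> ?S" "K \<subseteq> M" and max: "\<forall>L\<in>?S. M \<subseteq> L \<longrightarrow> M = L"
    using finite_has_maximal2 by meson
  have "maximal_subgroup G M"
    unfolding maximal_subgroup_def
  proof (intro conjI allI impI)
    show "subgroup M G" "M \<noteq> carrier G"
      using M(1) by simp_all
  next
    fix L assume "subgroup L G \<and> M \<subseteq> L"
    then show "L = M \<or> L = carrier G"
      using max by auto
  qed
  with \<open>K \<subseteq> M\<close> show ?thesis
    using that by blast
qed

lemma maximal_subgroup_cases:
  assumes "maximal_subgroup G M" and "subgroup K G" and "M \<subseteq> K"
  shows "K = M \<or> K = carrier G"
  using assms unfolding maximal_subgroup_def by simp

context group
begin

lemma subgroup_restrict_iff: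
  assumes "subgroup N G"
  shows "subgroup K (G\<lparr>carrier := N\<rparr>) \<longleftrightarrow> subgroup K G \<and> K \<subseteq> N"
proof
  assume "subgroup K (G\<lparr>carrier := N\<rparr>)"
  then show "subgroup K G \<and> K \<subseteq> N"
    using incl_subgroup[OF assms] subgroup.subset by force
next
  assume "subgroup K G \<and> K \<subseteq> N"
  then show "subgroup K (G\<lparr>carrier := N\<rparr>)"
    using subgroup_incl assms by blast
qed

lemma maximal_subgroup_restrict_iff:
  assumes "subgroup N G"
  shows "maximal_subgroup (G\<lparr>carrier := N\<rparr>) M \<longleftrightarrow>
    subgroup M G \<and> M \<subseteq> N \<and> M \<noteq> N \<and>
    (\<forall>K. subgroup K G \<and> K \<subseteq> N \<and> M \<subseteq> K \<longrightarrow> K = M \<or> K = N)"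
  unfolding maximal_subgroup_def subgroup_restrict_iff[OF assms] by auto

lemma normal_Inter:
  assumes "\<And>K. K \<in> S \<Longrightarrow> K \<lhd> G" and "S \<noteq> {}"
  shows "\<Inter>S \<lhd> G"
proof -
  have "subgroup (\<Inter>S) G"
    using assms normal_imp_subgroup by (intro subgroups_Inter) auto
  moreover have "g \<otimes> x \<otimes> inv g \<in> \<Inter>S" if "g \<in> carrier G" "x \<in> \<Inter>S" for g x
    using that assms(1) normal_inv_iff by simp
  ultimately show ?thesis
    by (simp add: normal_inv_iff)
qed

lemma normal_conj_image:
  assumes "K \<lhd> G" and "h \<in> carrier G"
  shows "(\<lambda>x. h \<otimes> x \<otimes> inv h) ` K = K"
proof
  show "(\<lambda>x. h \<otimes> x \<otimes> inv h) ` K \<subseteq> K"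
    using assms normal_inv_iff by auto
  show "K \<subseteq> (\<lambda>x. h \<otimes> x \<otimes> inv h) ` K"
  proof
    fix x assume x: "x \<in> K"
    then have "inv h \<otimes> x \<otimes> h \<in> K"
      using assms normal_inv_iff[of K] inv_closed[of h] inv_inv[of h] by metis
    moreover have "x = h \<otimes> (inv h \<otimes> x \<otimes> h) \<otimes> inv h"
      using assms x conjugation_is_surj normal_imp_subgroup subgroup.mem_carrier by metis
    ultimately show "x \<in> (\<lambda>x. h \<otimes> x \<otimes> inv h) ` K"
      by blast
  qed
qed

lemma conj_invariant_iff_normal:
  assumes "subgroup N G"
  shows "conj_invariant G N K \<longleftrightarrow> K \<lhd> G \<and> K \<subseteq> N"
proof
  assume "conj_invariant G N K"
  then have "subgroup K G" "K \<subseteq> N" "\<forall>h\<in>carrier G. (\<lambda>x. h \<otimes> x \<otimes> inv h) ` K = K"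
    unfolding conj_invariant_def subgroup_restrict_iff[OF assms] by auto
  then show "K \<lhd> G \<and> K \<subseteq> N"
    unfolding normal_inv_iff by blast
next
  assume "K \<lhd> G \<and> K \<subseteq> N"
  then show "conj_invariant G N K"
    unfolding conj_invariant_def subgroup_restrict_iff[OF assms]
    using normal_conj_image normal_imp_subgroup by blast
qed

lemma normal_maximal_subgroup_dichotomy:
  assumes "K \<lhd> G" and "maximal_subgroup G M"
  shows "K \<subseteq> M \<or> K <#> M = carrier G"
proof -
  interpret second_isomorphism_grp K G M
    using assms unfolding second_isomorphism_grp_def second_isomorphism_grp_axioms_def
      maximal_subgroup_def by simp
  have "K <#> M = M \<or> K <#> M = carrier G"
    using maximal_subgroup_cases[OF assms(2) normal_set_mult_subgroup S_contained_in_set_mult] .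
  then show ?thesis
    using H_contained_in_set_mult by auto
qed

lemma set_mult_Int_subset:
  assumes "subgroup N G" and "L \<subseteq> N" and "M \<subseteq> carrier G"
  shows "N \<inter> (L <#> M) \<subseteq> L <#> (N \<inter> M)"
proof
  fix x assume x: "x \<in> N \<inter> (L <#> M)"
  then obtain a b where ab: "a \<in> L" "b \<in> M" "x = a \<otimes> b"
    unfolding set_mult_def by blast
  have a: "a \<in> N" "a \<in> carrier G" and b: "b \<in> carrier G"
    using ab(1,2) assms subgroup.subset[OF assms(1)] by auto
  have "b = inv a \<otimes> x"
    using ab(3) a b by (simp add: m_assoc[symmetric])
  also have "\<dots> \<in> N"
    using x a(1) assms(1) by (simp add: subgroup.m_closed subgroup.m_inv_closed)
  finally have "b \<in> N \<inter> M"
    using ab(2) by simp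
  with ab(1,3) show "x \<in> L <#> (N \<inter> M)"
    unfolding set_mult_def by blast
qed

lemma set_mult_eq_carrier_factor:
  assumes "L <#> M = carrier G" and "L \<subseteq> carrier G" and "M \<subseteq> carrier G"
    and "g \<in> carrier G"
  obtains a where "a \<in> L" and "inv a \<otimes> g \<in> M"
proof -
  obtain a b where ab: "a \<in> L" "b \<in> M" "g = a \<otimes> b"
    using assms(1,4) unfolding set_mult_def by blast
  have "a \<in> carrier G" "b \<in> carrier G"
    using assms(2,3) ab(1,2) by auto
  then have "inv a \<otimes> g = b"
    using ab(3) by (simp add: m_assoc[symmetric])
  with ab(1,2) show ?thesis
    using that by simp
qed

lemma normal_Int_Inter_others:
  assumes "N \<lhd> G" and "\<forall>i\<in>I. M i \<inter> N \<lhd> G"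
  shows "N \<inter> (\<Inter>i\<in>I - {j}. M i) \<lhd> G"
proof -
  have "N \<inter> (\<Inter>i\<in>I - {j}. M i) = \<Inter>(insert N ((\<lambda>i. M i \<inter> N) ` (I - {j})))"
    by auto
  moreover have "\<Inter>(insert N ((\<lambda>i. M i \<inter> N) ` (I - {j}))) \<lhd> G"
    by (rule normal_Inter) (use assms in auto)
  ultimately show ?thesis
    by simp
qed

lemma Int_Inter_others_supplement:
  assumes "N \<lhd> G" and "\<forall>i\<in>I. maximal_subgroup G (M i) \<and> M i \<inter> N \<lhd> G"
    and "gen_pos N I (\<lambda>i. M i \<inter> N)" and "j \<in> I"
  shows "(N \<inter> (\<Inter>i\<in>I - {j}. M i)) <#> M j = carrier G"
proof -
  obtain x where x: "x \<in> N" "\<forall>i\<in>I - {j}. x \<in> M i \<inter> N" "x \<notin> M j \<inter> N"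
    using gen_pos_iff[THEN iffD1, OF assms(3), rule_format, OF assms(4)] by blast
  then have "x \<in> N \<inter> (\<Inter>i\<in>I - {j}. M i)" "x \<notin> M j"
    by simp_all
  then have "\<not> N \<inter> (\<Inter>i\<in>I - {j}. M i) \<subseteq> M j"
    by blast
  moreover have "N \<inter> (\<Inter>i\<in>I - {j}. M i) \<lhd> G"
    using assms(2) by (intro normal_Int_Inter_others[OF assms(1)]) simp
  moreover have "maximal_subgroup G (M j)"
    using assms(2,4) by simp
  ultimately show ?thesis
    using normal_maximal_subgroup_dichotomy[of "N \<inter> (\<Inter>i\<in>I - {j}. M i)" "M j"] by simp
qed

lemma exists_translate_into_Inter_maximal:
  assumes "N \<lhd> G" and "finite I"
    and "\<forall>i\<in>I. maximal_subgroup G (M i) \<and> M i \<inter> N \<lhd> G"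
    and "gen_pos N I (\<lambda>i. M i \<inter> N)" and "h \<in> carrier G"
  shows "\<exists>n\<in>N. \<forall>i\<in>I. n \<otimes> h \<in> M i"
proof -
  have N: "subgroup N G" "N \<subseteq> carrier G"
    using assms(1) normal_imp_subgroup subgroup.subset by blast+
  have M: "\<forall>i\<in>I. subgroup (M i) G"
    using assms(3) unfolding maximal_subgroup_def by auto
  have "\<exists>n\<in>N. \<forall>i\<in>J. n \<otimes> h \<in> M i" if "J \<subseteq> I" for J
    using finite_subset[OF that assms(2)] that
  proof (induction J rule: finite_induct)
    case empty
    then show ?case
      using subgroup.one_closed[OF N(1)] by blast
  next
    case (insert j J)
    then obtain n where n: "n \<in> N" "\<forall>i\<in>J. n \<otimes> h \<in> M i"
      by blast
    have j: "j \<in> I"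
      using insert(4) by simp
    let ?L = "N \<inter> (\<Inter>i\<in>I - {j}. M i)"
    \<comment> \<open>Correcting by an element of \<open>?L\<close> achieves \<open>M j\<close> without losing the \<open>M i\<close>, \<open>i \<in> J\<close>.\<close>
    have G: "n \<in> carrier G" "n \<otimes> h \<in> carrier G" "?L \<subseteq> carrier G"
      using n(1) N(2) assms(5) by auto
    have "M j \<subseteq> carrier G"
      using M j subgroup.subset by blast
    then obtain a where a: "a \<in> ?L" "inv a \<otimes> (n \<otimes> h) \<in> M j"
      using set_mult_eq_carrier_factor[OF Int_Inter_others_supplement[OF assms(1,3,4) j] G(3)
          \<open>M j \<subseteq> carrier G\<close> G(2)] by blast
    have aG: "a \<in> carrier G"
      using a(1) G(3) by blast
    have "inv a \<otimes> (n \<otimes> h) \<in> M i" if "i \<in> J" for i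
    proof -
      have "a \<in> M i"
        using a(1) that insert(2,4) by auto
      with that n(2) M insert(4) show ?thesis
        by (simp add: subgroup.m_closed subgroup.m_inv_closed subset_iff)
    qed
    moreover have "inv a \<otimes> n \<in> N"
      using a(1) n(1) N(1) by (simp add: subgroup.m_closed subgroup.m_inv_closed)
    ultimately show ?case
      using a(2) G(1) aG assms(5) by (intro bexI[of _ "inv a \<otimes> n"]) (auto simp: m_assoc)
  qed
  then show ?thesis
    by blast
qed

end


section \<open>The Frattini subgroup of a normal subgroup\<close>

context group
begin

lemma conj_hom:
  assumes "h \<in> carrier G"
  shows "(\<lambda>y. h \<otimes> y \<otimes> inv h) \<in> hom G G"
proof (rule homI)
  fix x y assume "x \<in> carrier G" "y \<in> carrier G"
  with assms show "h \<otimes> (x \<otimes> y) \<otimes> inv h = h \<otimes> x \<otimes> inv h \<otimes> (h \<otimes> y \<otimes> inv h)"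
    by (simp add: m_assoc inv_solve_left)
qed (use assms in simp)

lemma maximal_subgroup_restrict_image:
  assumes "\<sigma> \<in> hom G G" and "\<tau> \<in> hom G G"
    and "\<And>x. x \<in> carrier G \<Longrightarrow> \<tau> (\<sigma> x) = x" and "\<And>x. x \<in> carrier G \<Longrightarrow> \<sigma> (\<tau> x) = x"
    and "subgroup N G" and "\<sigma> ` N = N"
    and "maximal_subgroup (G\<lparr>carrier := N\<rparr>) M"
  shows "maximal_subgroup (G\<lparr>carrier := N\<rparr>) (\<sigma> ` M)"
proof -
  interpret \<sigma>: group_hom G G \<sigma>
    by unfold_locales (rule assms(1))
  interpret \<tau>: group_hom G G \<tau>
    by unfold_locales (rule assms(2))
  have \<tau>\<sigma>: "\<tau> ` \<sigma> ` S = S" and \<sigma>\<tau>: "\<sigma> ` \<tau> ` S = S" if "S \<subseteq> carrier G" for S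
    using that assms(3,4) by (simp_all add: image_image subset_iff cong: image_cong)
  have N: "N \<subseteq> carrier G"
    using assms(5) subgroup.subset by blast
  then have \<tau>N: "\<tau> ` N = N"
    using \<tau>\<sigma>[OF N] assms(6) by simp
  have M: "subgroup M G" "M \<subseteq> N" "M \<noteq> N"
    and max: "\<And>K. subgroup K G \<Longrightarrow> K \<subseteq> N \<Longrightarrow> M \<subseteq> K \<Longrightarrow> K = M \<or> K = N"
    using assms(7) unfolding maximal_subgroup_restrict_iff[OF assms(5)] by blast+
  have MG: "M \<subseteq> carrier G"
    using M(2) N by blast
  have "\<sigma> ` M \<noteq> N"
    using M(3) \<tau>\<sigma>[OF MG] \<tau>N by auto
  moreover have "K = \<sigma> ` M \<or> K = N"
    if K: "subgroup K G" "K \<subseteq> N" "\<sigma> ` M \<subseteq> K" for K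
  proof -
    have KG: "K \<subseteq> carrier G"
      using K(2) N by blast
    have "M \<subseteq> \<tau> ` K"
      using image_mono[OF K(3), of \<tau>] \<tau>\<sigma>[OF MG] by simp
    moreover have "\<tau> ` K \<subseteq> N"
      using image_mono[OF K(2), of \<tau>] \<tau>N by simp
    ultimately have "\<tau> ` K = M \<or> \<tau> ` K = N"
      using max \<tau>.subgroup_img_is_subgroup[OF K(1)] by blast
    then show ?thesis
      using \<sigma>\<tau>[OF KG] assms(6) by auto
  qed
  ultimately show ?thesis
    unfolding maximal_subgroup_restrict_iff[OF assms(5)]
    using \<sigma>.subgroup_img_is_subgroup[OF M(1)] image_mono[OF M(2), of \<sigma>] assms(6) by auto
qed

lemma conj_maximal_subgroup_restrict:
  assumes "N \<lhd> G" and "h \<in> carrier G" and "maximal_subgroup (G\<lparr>carrier := N\<rparr>) M"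
  shows "maximal_subgroup (G\<lparr>carrier := N\<rparr>) ((\<lambda>y. h \<otimes> y \<otimes> inv h) ` M)"
proof (rule maximal_subgroup_restrict_image)
  show "(\<lambda>y. inv h \<otimes> y \<otimes> h) \<in> hom G G"
    using conj_hom[of "inv h"] assms(2) by simp
qed (use assms conj_hom normal_imp_subgroup normal_conj_image in
     \<open>simp_all add: m_assoc inv_solve_left' flip: m_assoc[of h "inv h"]\<close>)

lemma frattini_restrict_eq:
  "frattini (G\<lparr>carrier := N\<rparr>) = \<Inter>(insert N {M. maximal_subgroup (G\<lparr>carrier := N\<rparr>) M})"
  unfolding frattini_def by auto

lemma frattini_restrict_normal:
  assumes "N \<lhd> G"
  shows "frattini (G\<lparr>carrier := N\<rparr>) \<lhd> G"
proof -
  let ?\<M> = "{M. maximal_subgroup (G\<lparr>carrier := N\<rparr>) M}"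
  have N: "subgroup N G"
    using assms normal_imp_subgroup by blast
  have "subgroup (\<Inter>(insert N ?\<M>)) G"
    using N maximal_subgroup_restrict_iff[OF N] by (intro subgroups_Inter) auto
  moreover have "g \<otimes> x \<otimes> inv g \<in> \<Inter>(insert N ?\<M>)"
    if g: "g \<in> carrier G" and x: "x \<in> \<Inter>(insert N ?\<M>)" for g x
  proof -
    have "g \<otimes> x \<otimes> inv g \<in> M" if M: "M \<in> ?\<M>" for M
    proof -
      have "(\<lambda>y. inv g \<otimes> y \<otimes> g) ` M \<in> ?\<M>"
        using conj_maximal_subgroup_restrict[OF assms, of "inv g"] g M by simp
      then obtain m where m: "m \<in> M" "x = inv g \<otimes> m \<otimes> g"
        using x by blast
      moreover have "m \<in> carrier G"
        using M m(1) maximal_subgroup_restrict_iff[OF N] subgroup.subset by blast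
      ultimately show ?thesis
        using g conjugation_is_surj by simp
    qed
    moreover have "g \<otimes> x \<otimes> inv g \<in> N"
      using assms g x normal_inv_iff by simp
    ultimately show ?thesis
      by blast
  qed
  ultimately show ?thesis
    unfolding frattini_restrict_eq normal_inv_iff by blast
qed

lemma frattini_restrict_subset_maximal:
  assumes "N \<lhd> G" and "finite (carrier G)" and "maximal_subgroup G M"
  shows "frattini (G\<lparr>carrier := N\<rparr>) \<subseteq> M"
proof (rule ccontr)
  let ?F = "frattini (G\<lparr>carrier := N\<rparr>)"
  assume "\<not> ?F \<subseteq> M"
  then have FM: "?F <#> M = carrier G"
    using normal_maximal_subgroup_dichotomy[OF frattini_restrict_normal[OF assms(1)] assms(3)]
    by blast
  have N: "subgroup N G" "N \<subseteq> carrier G"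
    using assms(1) normal_imp_subgroup subgroup.subset by blast+
  have M: "subgroup M G" "M \<subseteq> carrier G"
    using assms(3) subgroup.subset unfolding maximal_subgroup_def by blast+
  have FN: "?F \<subseteq> N"
    unfolding frattini_restrict_eq by blast
  have "subgroup (N \<inter> M) (G\<lparr>carrier := N\<rparr>)"
    using N M subgroup_restrict_iff subgroups_Inter_pair by blast
  moreover have "N \<inter> M \<noteq> carrier (G\<lparr>carrier := N\<rparr>)"
    using \<open>\<not> ?F \<subseteq> M\<close> FN by auto
  moreover have "finite (carrier (G\<lparr>carrier := N\<rparr>))"
    using N(2) assms(2) finite_subset by auto
  ultimately obtain M' where M': "maximal_subgroup (G\<lparr>carrier := N\<rparr>) M'" "N \<inter> M \<subseteq> M'"
    using exists_maximal_subgroup by metis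
  then have M'N: "subgroup M' G" "M' \<subseteq> N" "M' \<noteq> N"
    unfolding maximal_subgroup_restrict_iff[OF N(1)] by blast+
  have "?F \<subseteq> M'"
    unfolding frattini_restrict_eq using M'(1) by blast
  have "N = N \<inter> (?F <#> M)"
    using FM N(2) by auto
  also have "\<dots> \<subseteq> ?F <#> (N \<inter> M)"
    using set_mult_Int_subset[OF N(1) FN M(2)] .
  also have "\<dots> \<subseteq> M' <#> M'"
    using \<open>?F \<subseteq> M'\<close> M'(2) by (rule mono_set_mult)
  also have "\<dots> = M'"
    using subgroup_mult_id[OF M'N(1)] .
  finally show False
    using M'N(2,3) by blast
qed

lemma comm_FactGroup_conj_closed:
  assumes "comm_group ((G\<lparr>carrier := N\<rparr>) Mod F)" and "N \<subseteq> carrier G" and "\<one> \<in> F"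
    and "subgroup K G" and "F \<subseteq> K" and "K \<subseteq> N" and "n \<in> N" and "k \<in> K"
  shows "n \<otimes> k \<otimes> inv n \<in> K"
proof -
  interpret Q: comm_group "(G\<lparr>carrier := N\<rparr>) Mod F"
    by (rule assms(1))
  have G: "n \<in> carrier G" "k \<in> carrier G"
    using assms(2,6,7,8) by auto
  have coset: "F #> a \<in> carrier ((G\<lparr>carrier := N\<rparr>) Mod F)" if "a \<in> N" for a
    using that unfolding FactGroup_def RCOSETS_def by auto
  have self: "a \<in> F #> a" if "a \<in> carrier G" for a
    using that assms(3) unfolding r_coset_def by force
  have "(F #> n) <#> (F #> k) = (F #> k) <#> (F #> n)"
    using Q.m_comm[OF coset coset] assms(6-8) by auto
  moreover have "n \<otimes> k \<in> (F #> n) <#> (F #> k)"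
    using self G unfolding set_mult_def by blast
  ultimately obtain a b where ab: "a \<in> F" "b \<in> F" "n \<otimes> k = (a \<otimes> k) \<otimes> (b \<otimes> n)"
    unfolding set_mult_def r_coset_def by auto
  have "a \<in> K" "b \<in> K" "a \<in> carrier G" "b \<in> carrier G"
    using ab(1,2) assms(4,5) subgroup.subset by blast+
  moreover have "n \<otimes> k \<otimes> inv n = a \<otimes> k \<otimes> b"
    using ab(3) G calculation(3,4) by (simp add: m_assoc)
  ultimately show ?thesis
    using assms(4,8) subgroup.m_closed by metis
qed

lemma maximal_subgroup_Int_normal:
  assumes "N \<lhd> G" and "finite (carrier G)" and "maximal_subgroup G M" and "\<not> N \<subseteq> M"
    and "comm_group ((G\<lparr>carrier := N\<rparr>) Mod frattini (G\<lparr>carrier := N\<rparr>))"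
  shows "M \<inter> N \<lhd> G"
proof -
  let ?F = "frattini (G\<lparr>carrier := N\<rparr>)"
  have N: "subgroup N G" "N \<subseteq> carrier G"
    using assms(1) normal_imp_subgroup subgroup.subset by blast+
  have M: "subgroup M G"
    using assms(3) unfolding maximal_subgroup_def by blast
  have MN: "subgroup (M \<inter> N) G"
    using M N(1) by (rule subgroups_Inter_pair)
  have "?F \<subseteq> M \<inter> N"
    using frattini_restrict_subset_maximal[OF assms(1-3)] frattini_restrict_eq by auto
  moreover have "\<one> \<in> ?F"
    using frattini_restrict_normal[OF assms(1)] normal_imp_subgroup subgroup.one_closed by blast
  moreover have "N <#> M = carrier G"
    using normal_maximal_subgroup_dichotomy[OF assms(1,3)] assms(4) by blast
  ultimately have "g \<otimes> k \<otimes> inv g \<in> M \<inter> N" if g: "g \<in> carrier G" and k: "k \<in> M \<inter> N" for g k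
  proof -
    obtain n m where nm: "n \<in> N" "m \<in> M" "g = n \<otimes> m"
      using g \<open>N <#> M = carrier G\<close> unfolding set_mult_def by blast
    have G: "n \<in> carrier G" "m \<in> carrier G" "k \<in> carrier G"
      using nm(1,2) k N(2) M subgroup.subset by blast+
    have "m \<otimes> k \<otimes> inv m \<in> M \<inter> N"
      using nm(2) k M normal_inv_iff assms(1) G(2)
      by (simp add: subgroup.m_closed subgroup.m_inv_closed)
    then have "n \<otimes> (m \<otimes> k \<otimes> inv m) \<otimes> inv n \<in> M \<inter> N"
      using comm_FactGroup_conj_closed[OF assms(5) N(2) \<open>\<one> \<in> ?F\<close> MN \<open>?F \<subseteq> M \<inter> N\<close> _ nm(1)]
      by blast
    moreover have "g \<otimes> k \<otimes> inv g = n \<otimes> (m \<otimes> k \<otimes> inv m) \<otimes> inv n"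
      using nm(3) G by (simp add: inv_mult_group m_assoc)
    ultimately show ?thesis
      by simp
  qed
  with MN show ?thesis
    unfolding normal_inv_iff by blast
qed

lemma maximal_conj_invariant_Int:
  assumes "N \<lhd> G" and "maximal_subgroup G M" and "\<not> N \<subseteq> M" and "M \<inter> N \<lhd> G"
  shows "maximal_conj_invariant G N (M \<inter> N)"
  unfolding maximal_conj_invariant_def
proof (intro conjI allI impI)
  have N: "subgroup N G" "N \<subseteq> carrier G"
    using assms(1) normal_imp_subgroup subgroup.subset by blast+
  show "conj_invariant G N (M \<inter> N)"
    using assms(4) conj_invariant_iff_normal[OF N(1)] by blast
  show "M \<inter> N \<noteq> N"
    using assms(3) by blast
  fix L assume L: "conj_invariant G N L \<and> L \<noteq> N \<and> M \<inter> N \<subseteq> L"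
  then have "L \<lhd> G" "L \<subseteq> N"
    using conj_invariant_iff_normal[OF N(1)] by blast+
  have "\<not> L <#> M = carrier G"
  proof
    assume LM: "L <#> M = carrier G"
    have "N = N \<inter> (L <#> M)"
      using LM N(2) by auto
    also have "\<dots> \<subseteq> L <#> (N \<inter> M)"
      using set_mult_Int_subset[OF N(1) \<open>L \<subseteq> N\<close>] assms(2) subgroup.subset[of M G]
      unfolding maximal_subgroup_def by blast
    also have "\<dots> \<subseteq> L <#> L"
      using L by (intro mono_set_mult) auto
    also have "\<dots> = L"
      using subgroup_mult_id \<open>L \<lhd> G\<close> normal_imp_subgroup by blast
    finally have "N \<subseteq> L" .
    with L \<open>L \<subseteq> N\<close> show False
      by simp
  qed
  then have "L \<subseteq> M"
    using normal_maximal_subgroup_dichotomy[OF \<open>L \<lhd> G\<close> assms(2)] by simp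
  with L \<open>L \<subseteq> N\<close> show "L = M \<inter> N"
    by auto
qed

end


section \<open>Passing to the quotient\<close>

context normal
begin

lemma subset_FactGroup_vimage:
  assumes "subgroup Y (G Mod H)"
  shows "H \<subseteq> {g \<in> carrier G. H #> g \<in> Y}"
proof
  fix h assume "h \<in> H"
  then have "h \<in> carrier G" "H #> h = H"
    using subset coset_join2[OF _ is_subgroup] by auto
  moreover have "H \<in> Y"
    using subgroup.one_closed[OF assms] by simp
  ultimately show "h \<in> {g \<in> carrier G. H #> g \<in> Y}"
    by simp
qed

lemma subgroup_eq_carrier_if_FactGroup_image_eq:
  assumes "subgroup K G" and "H \<subseteq> K" and "(\<lambda>g. H #> g) ` K = carrier (G Mod H)"
  shows "K = carrier G"
proof
  show "carrier G \<subseteq> K"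
  proof
    fix g assume g: "g \<in> carrier G"
    then obtain k where k: "k \<in> K" "H #> g = H #> k"
      using assms(3) unfolding carrier_FactGroup by (metis imageI imageE)
    then have "g \<in> H #> k"
      using rcos_self[OF g is_subgroup] by simp
    then obtain h where "h \<in> H" "g = h \<otimes> k"
      unfolding r_coset_def by blast
    moreover have "h \<in> K"
      using \<open>h \<in> H\<close> assms(2) by auto
    ultimately show "g \<in> K"
      using k(1) subgroup.m_closed[OF assms(1)] by simp
  qed
qed (rule subgroup.subset[OF assms(1)])

lemma maximal_subgroup_FactGroup_vimage:
  assumes "maximal_subgroup (G Mod H) Y"
  shows "maximal_subgroup G {g \<in> carrier G. H #> g \<in> Y}"
proof -
  let ?K = "{g \<in> carrier G. H #> g \<in> Y}"
  interpret \<pi>: group_hom G "G Mod H" "\<lambda>g. H #> g"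
    using factorgroup_is_group r_coset_hom_Mod
    by (simp add: group_hom_def group_hom_axioms_def is_group)
  have Y: "subgroup Y (G Mod H)" "Y \<noteq> carrier (G Mod H)"
    using assms unfolding maximal_subgroup_def by blast+
  have K: "subgroup ?K G"
    using factgroup_subgroup_union_subgroup[OF Y(1)] factgroup_subgroup_union_char[OF Y(1)]
    by simp
  have HK: "H \<subseteq> ?K"
    using subset_FactGroup_vimage[OF Y(1)] .
  have "?K \<noteq> carrier G"
  proof
    assume "?K = carrier G"
    then have "H #> g \<in> Y" if "g \<in> carrier G" for g
      using that by (metis (mono_tags, lifting) mem_Collect_eq)
    then have "carrier (G Mod H) \<subseteq> Y"
      unfolding carrier_FactGroup by auto
    with Y subgroup.subset[OF Y(1)] show False
      by simp
  qed
  moreover have "K' = ?K \<or> K' = carrier G" if K': "subgroup K' G" "?K \<subseteq> K'" for K'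
  proof -
    have "Y \<subseteq> (\<lambda>g. H #> g) ` K'"
    proof
      fix y assume "y \<in> Y"
      then obtain g where g: "g \<in> carrier G" "y = H #> g"
        using subgroup.subset[OF Y(1)] unfolding carrier_FactGroup by auto
      with \<open>y \<in> Y\<close> have "g \<in> K'"
        using K'(2) by auto
      with g(2) show "y \<in> (\<lambda>g. H #> g) ` K'"
        by simp
    qed
    then have "(\<lambda>g. H #> g) ` K' = Y \<or> (\<lambda>g. H #> g) ` K' = carrier (G Mod H)"
      using maximal_subgroup_cases[OF assms \<pi>.subgroup_img_is_subgroup[OF K'(1)]] by blast
    then show ?thesis
    proof
      assume "(\<lambda>g. H #> g) ` K' = Y"
      then have "K' \<subseteq> ?K"
        using subgroup.subset[OF K'(1)] by auto
      with K'(2) show ?thesis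
        by simp
    next
      assume "(\<lambda>g. H #> g) ` K' = carrier (G Mod H)"
      then have "K' = carrier G"
        using subgroup_eq_carrier_if_FactGroup_image_eq[OF K'(1)] HK K'(2) by auto
      then show ?thesis
        by simp
    qed
  qed
  ultimately show ?thesis
    unfolding maximal_subgroup_def using K by blast
qed

lemma MaxDim_rel_FactGroup_add_le:
  fixes l :: nat
  assumes "finite (carrier G)"
    and "\<forall>i\<in>{1..l}. maximal_subgroup G (M i)" and "gen_pos H {1..l} (\<lambda>i. M i \<inter> H)"
  shows "l + MaxDim_rel (G Mod H) ((\<lambda>g. H #> g) ` (carrier G \<inter> (\<Inter>i\<in>{1..l}. M i))) \<le> MaxDim G"
proof -
  define R where "R = carrier G \<inter> (\<Inter>i\<in>{1..l}. M i)"
  define m where "m = MaxDim_rel (G Mod H) ((\<lambda>g. H #> g) ` R)"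
  obtain Y where Y: "\<forall>i\<in>{1..m}. maximal_subgroup (G Mod H) (Y i)"
    and Y_gen_pos: "gen_pos ((\<lambda>g. H #> g) ` R) {1..m} (\<lambda>i. Y i \<inter> (\<lambda>g. H #> g) ` R)"
    using MaxDim_rel_attained[of "(\<lambda>g. H #> g) ` R" "G Mod H"] assms(1)
    unfolding m_def R_def by blast
  define K where "K i = {g \<in> carrier G. H #> g \<in> Y i}" for i
  have "gen_pos ((\<lambda>g. H #> g) ` R) {1..m} Y"
    using Y_gen_pos gen_pos_cong[of "{1..m}" "\<lambda>i. Y i \<inter> (\<lambda>g. H #> g) ` R" _ Y] by simp
  then have "gen_pos R {1..m} (\<lambda>i. (\<lambda>g. H #> g) -` Y i)"
    by (rule gen_pos_vimage)
  moreover have "gen_pos R {1..m} (\<lambda>i. (\<lambda>g. H #> g) -` Y i) \<longleftrightarrow> gen_pos R {1..m} K"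
    by (rule gen_pos_cong) (auto simp: K_def R_def)
  ultimately have K_gen_pos: "gen_pos R {1..m} K"
    by simp
  have M_gen_pos: "gen_pos H {1..l} M"
    using assms(3) gen_pos_cong[of "{1..l}" "\<lambda>i. M i \<inter> H" H M] by simp
  have "gen_pos (carrier G) {1..l+m} (append_family l M K)"
  proof (rule gen_pos_append_family[OF M_gen_pos _ _ K_gen_pos])
    show "\<forall>i\<in>{1..m}. H \<subseteq> K i"
      using Y subset_FactGroup_vimage unfolding K_def maximal_subgroup_def by blast
  qed (auto simp: R_def subset)
  moreover have "\<forall>i\<in>{1..l+m}. maximal_subgroup G (append_family l M K i)"
    using assms(2) Y maximal_subgroup_FactGroup_vimage unfolding K_def
    by (intro append_family_ball) auto
  ultimately have "l + m \<le> MaxDim G"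
    by (rule MaxDim_ge[OF assms(1), rotated])
  then show ?thesis
    unfolding m_def R_def .
qed

lemma FactGroup_carrier_eq_image_Inter_maximal:
  assumes "finite I" and "\<forall>i\<in>I. maximal_subgroup G (M i) \<and> M i \<inter> H \<lhd> G"
    and "gen_pos H I (\<lambda>i. M i \<inter> H)"
  shows "(\<lambda>g. H #> g) ` (carrier G \<inter> (\<Inter>i\<in>I. M i)) = carrier (G Mod H)"
proof
  show "(\<lambda>g. H #> g) ` (carrier G \<inter> (\<Inter>i\<in>I. M i)) \<subseteq> carrier (G Mod H)"
    unfolding carrier_FactGroup by blast
  show "carrier (G Mod H) \<subseteq> (\<lambda>g. H #> g) ` (carrier G \<inter> (\<Inter>i\<in>I. M i))"
  proof
    fix y assume "y \<in> carrier (G Mod H)"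
    then obtain g where g: "g \<in> carrier G" "y = H #> g"
      unfolding carrier_FactGroup by blast
    then obtain n where n: "n \<in> H" "\<forall>i\<in>I. n \<otimes> g \<in> M i"
      using exists_translate_into_Inter_maximal[OF normal_axioms assms] by blast
    have "n \<in> carrier G"
      using n(1) subset by blast
    then have "H #> (n \<otimes> g) = H #> n #> g"
      using coset_mult_assoc[OF subset _ g(1)] by simp
    also have "\<dots> = y"
      using coset_join2[OF \<open>n \<in> carrier G\<close> is_subgroup n(1)] g(2) by simp
    finally have "H #> (n \<otimes> g) = y" .
    moreover have "n \<otimes> g \<in> carrier G \<inter> (\<Inter>i\<in>I. M i)"
      using n(2) g(1) \<open>n \<in> carrier G\<close> by simp
    ultimately show "y \<in> (\<lambda>g. H #> g) ` (carrier G \<inter> (\<Inter>i\<in>I. M i))"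
      by blast
  qed
qed

end


theorem proposition3p3:
  fixes H (structure) and N :: "'a set" and M :: "nat \<Rightarrow> 'a set" and k l :: nat
  assumes "group H" and "finite (carrier H)" and "N \<lhd> H"
    and "l \<le> k"
    and "\<forall>i\<in>{1..k}. maximal_subgroup H (M i)"
    and "gen_pos (carrier H) {1..k} M"
    and "gen_pos N {1..l} (\<lambda>i. M i \<inter> N)"
    and "\<forall>j\<in>{l+1..k}. N \<inter> (\<Inter>i\<in>{1..l}. M i \<inter> N) \<subseteq> M j"
  defines "R \<equiv> carrier H \<inter> (\<Inter>i\<in>{1..l}. M i)"
  shows "int l \<le> int (MaxDim H) - int (MaxDim_rel (H Mod N) ((\<lambda>h. N #> h) ` R)) \<and>
    (comm_group ((H\<lparr>carrier := N\<rparr>) Mod (frattini (H\<lparr>carrier := N\<rparr>))) \<longrightarrow>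
           int l \<le> int (MaxDim H) - int (MaxDim (H Mod N)) \<and> l \<le> MaxDim_conj H N)"
proof -
  interpret normal N H
    by (rule assms(3))
  have M_max: "\<forall>i\<in>{1..l}. maximal_subgroup H (M i)"
    using assms(4,5) by auto
  have "l + MaxDim_rel (H Mod N) ((\<lambda>h. N #> h) ` R) \<le> MaxDim H"
    unfolding R_def by (rule MaxDim_rel_FactGroup_add_le[OF assms(2) M_max assms(7)])
  moreover have "l \<le> MaxDim_conj H N \<and> (\<lambda>h. N #> h) ` R = carrier (H Mod N)"
    if comm: "comm_group ((H\<lparr>carrier := N\<rparr>) Mod (frattini (H\<lparr>carrier := N\<rparr>)))"
  proof -
    have not_subset: "\<not> N \<subseteq> M i" if "i \<in> {1..l}" for i
      using gen_pos_not_subset[OF assms(7) that] by blast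
    have Int_normal: "\<forall>i\<in>{1..l}. maximal_subgroup H (M i) \<and> M i \<inter> N \<lhd> H"
      using maximal_subgroup_Int_normal[OF assms(3,2) _ not_subset comm] M_max by blast
    have "l \<le> MaxDim_conj H N"
      using MaxDim_conj_ge[OF finite_subset[OF subset assms(2)] _ assms(7)]
        maximal_conj_invariant_Int[OF assms(3)] not_subset Int_normal by blast
    moreover have "(\<lambda>h. N #> h) ` R = carrier (H Mod N)"
      unfolding R_def
      by (rule FactGroup_carrier_eq_image_Inter_maximal[OF _ Int_normal assms(7)]) simp
    ultimately show ?thesis
      by blast
  qed
  ultimately show ?thesis
    using MaxDim_rel_carrier[of "H Mod N"] by auto
qed

end
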